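(* Let $(r,t)\in\{(2,3),(2,4)\}$, $\alpha=2^r-1=3$, $\beta=2^{t-1}-2^{r-1}$ (so $\beta=2$ or $\beta=6$), and let $\mathcal{C}\subseteq\mathbb{Z}_2^\alpha\times\mathbb{Z}_4^\beta$ be a $\mathbb{Z}_2\mathbb{Z}_4$-additive 1-perfect code. Let $\mathcal{C}'\subseteq\mathbb{Z}_2^{\alpha+1}\times\mathbb{Z}_4^\beta$ be obtained from $\mathcal{C}$ by inserting, at a fixed position of the $\mathbb{Z}_2$ part of every codeword $\mathbf{u}$, an extra binary coordinate equal to $w(\mathbf{u})\bmod 2$. Then $\mathcal{C}'$ is not $\mathbb{Z}_2\mathbb{Z}_4$-cyclic.
   Context: A $\mathbb{Z}_2\mathbb{Z}_4$-additive code is an additive subgroup of $\mathbb{Z}_2^\alpha\times\mathbb{Z}_4^\beta$; vectors are $\mathbf{u}=(u\mid u')$ with $u\in\mathbb{Z}_2^\alpha$, $u'\in\mathbb{Z}_4^\beta$. The weight is $w(\mathbf{u})=w_H(u)+w_L(u')$ (Hamming weight plus Lee weight, Lee weights of $0,1,2,3$ being $0,1,2,1$). The Gray map $\phi:\mathbb{Z}_4\to\mathbb{Z}_2^2$ is $0\mapsto(0,0),1\mapsto(0,1),2\mapsto(1,1),3\mapsto(1,0)$, $\Phi(u\mid u')=(u\mid\phi(u'_1),\dots,\phi(u'_\beta))$. A binary code $C\subseteq\mathbb{Z}_2^n$ is 1-perfect if the Hamming balls of radius 1 around its codewords partition $\mathbb{Z}_2^n$; a $\mathbb{Z}_2\mathbb{Z}_4$-additive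 code is 1-perfect if its Gray image is. With $\sigma(v_1,\dots,v_m)=(v_m,v_1,\dots,v_{m-1})$ and $\sigma(u\mid u')=(\sigma(u)\mid\sigma(u'))$, a code is $\mathbb{Z}_2\mathbb{Z}_4$-cyclic if closed under $\sigma$. *)

theory Defs
  imports Main
begin

text \<open>Vectors of Z2^a x Z4^b are pairs of lists of naturals: the binary part has
  length a with entries < 2, the quaternary part length b with entries < 4.\<close>

type_synonym z2z4vec = "nat list \<times> nat list"

definition Z2Z4_space :: "nat \<Rightarrow> nat \<Rightarrow> z2z4vec set" where
  "Z2Z4_space a b = {(u, u'). length u = a \<and> (\<forall>x\<in>set u. x < 2)
                       \<and> length u' = b \<and> (\<forall>x\<in>set u'. x < 4)}"

definition z2z4_add :: "z2z4vec \<Rightarrow> z2z4vec \<Rightarrow> z2z4vec" where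
  "z2z4_add v w = (map2 (\<lambda>x y. (x + y) mod 2) (fst v) (fst w),
                   map2 (\<lambda>x y. (x + y) mod 4) (snd v) (snd w))"

definition z2z4_neg :: "z2z4vec \<Rightarrow> z2z4vec" where
  "z2z4_neg v = (map (\<lambda>x. (2 - x mod 2) mod 2) (fst v), map (\<lambda>x. (4 - x mod 4) mod 4) (snd v))"

definition z2z4_zero :: "nat \<Rightarrow> nat \<Rightarrow> z2z4vec" where
  "z2z4_zero a b = (replicate a 0, replicate b 0)"

definition Z2Z4_additive :: "nat \<Rightarrow> nat \<Rightarrow> z2z4vec set \<Rightarrow> bool" where
  "Z2Z4_additive a b C \<longleftrightarrow> C \<subseteq> Z2Z4_space a b \<and> z2z4_zero a b \<in> C
     \<and> (\<forall>v\<in>C. \<forall>w\<in>C. z2z4_add v w \<in> C) \<and> (\<forall>v\<in>C. z2z4_neg v \<in> C)"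

definition lee_weight :: "nat \<Rightarrow> nat" where
  "lee_weight x = (if x = 0 then 0 else if x = 2 then 2 else 1)"

definition z2z4_weight :: "z2z4vec \<Rightarrow> nat" where
  "z2z4_weight v = length (filter (\<lambda>x. x \<noteq> 0) (fst v)) + sum_list (map lee_weight (snd v))"

fun gray :: "nat \<Rightarrow> nat list" where
  "gray x = (if x = 0 then [0,0] else if x = 1 then [0,1] else if x = 2 then [1,1] else [1,0])"

definition Gray :: "z2z4vec \<Rightarrow> nat list" where
  "Gray v = fst v @ concat (map gray (snd v))"

definition binary_space :: "nat \<Rightarrow> nat list set" where
  "binary_space n = {x. length x = n \<and> (\<forall>y\<in>set x. y < 2)}"

definition hamming_dist :: "nat list \<Rightarrow> nat list \<Rightarrow> nat" where
  "hamming_dist x y = card {i. i < length x \<and> x ! i \<noteq> y ! i}"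

definition one_perfect :: "nat \<Rightarrow> nat list set \<Rightarrow> bool" where
  "one_perfect n C \<longleftrightarrow> C \<subseteq> binary_space n \<and>
     (\<forall>x\<in>binary_space n. \<exists>!c. c \<in> C \<and> hamming_dist x c \<le> 1)"

definition Z2Z4_one_perfect :: "nat \<Rightarrow> nat \<Rightarrow> z2z4vec set \<Rightarrow> bool" where
  "Z2Z4_one_perfect a b C \<longleftrightarrow> one_perfect (a + 2 * b) (Gray ` C)"

definition cshift :: "nat list \<Rightarrow> nat list" where
  "cshift xs = (if xs = [] then [] else last xs # butlast xs)"

definition z2z4_sigma :: "z2z4vec \<Rightarrow> z2z4vec" where
  "z2z4_sigma v = (cshift (fst v), cshift (snd v))"

definition Z2Z4_cyclic :: "z2z4vec set \<Rightarrow> bool" where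
  "Z2Z4_cyclic C \<longleftrightarrow> (\<forall>v\<in>C. z2z4_sigma v \<in> C)"

definition extend_at :: "nat \<Rightarrow> z2z4vec \<Rightarrow> z2z4vec" where
  "extend_at p v = (take p (fst v) @ [z2z4_weight v mod 2] @ drop p (fst v), snd v)"

end

theory Submission
  imports Defs
begin

text \<open>Take the supports of the Gray images of the extended code C' as a family S of
  subsets of the 4 + 2 beta Gray coordinates. Since C' is the parity extension of a
  1-perfect code, S contains the empty set, its members have even size and pairwise
  symmetric difference of size at least 3, and every odd-size set is within distance 1
  of a member. If C' were cyclic, S would be invariant under the coordinate permutation
  pi induced by the shift. As beta divides 6, pi^6 translates the four binary
  coordinates by 2 and fixes the others, so every member of S meets the binary
  coordinates in an even number of points. Hence each weight-3 set {0, x, y} with x, y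
  quaternary coordinates lies in a member {k, 0, x, y} of S with k in {1, 2, 3}, and two
  such members with the same k and a common quaternary coordinate are at distance 2.
  For beta = 6 the sets {0, 4, q}, q = 5..8, already need four distinct values of k;
  for beta = 2 the invariance under pi rules out every choice.\<close>

section \<open>Binary words and their supports\<close>

lemma card_sym_diff:
  assumes "finite A" "finite B"
  shows "card (sym_diff A B) + 2 * card (A \<inter> B) = card A + card B"
proof -
  have "sym_diff A B = (A \<union> B) - (A \<inter> B)" by blast
  then have "card (sym_diff A B) = card (A \<union> B) - card (A \<inter> B)"
    using assms by (metis card_Diff_subset finite_Int Int_lower1 le_supI1)
  moreover have "card (A \<inter> B) \<le> card (A \<union> B)"
    using assms by (intro card_mono) auto
  ultimately show ?thesis
    using card_Un_Int[OF assms] by simp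
qed

definition support :: "nat list \<Rightarrow> nat set" where
  "support g = {i. i < length g \<and> g ! i \<noteq> 0}"

definition indicator_list :: "nat \<Rightarrow> nat set \<Rightarrow> nat list" where
  "indicator_list n X = map (\<lambda>i. if i \<in> X then 1 else 0) [0..<n]"

lemma support_subset: "support g \<subseteq> {..<length g}"
  unfolding support_def by auto

lemma finite_support [simp]: "finite (support g)"
  using finite_subset[OF support_subset] by blast

lemma card_support: "card (support g) = length (filter (\<lambda>x. x \<noteq> 0) g)"
  unfolding support_def by (simp add: length_filter_conv_card)

lemma indicator_list_in_binary_space: "indicator_list n X \<in> binary_space n"
  unfolding indicator_list_def binary_space_def by auto

lemma support_indicator_list: "X \<subseteq> {..<n} \<Longrightarrow> support (indicator_list n X) = X"
  unfolding indicator_list_def support_def by (auto split: if_splits)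

lemma binary_space_nth_eq_iff:
  assumes "g \<in> binary_space n" "h \<in> binary_space n" "i < n"
  shows "g ! i = h ! i \<longleftrightarrow> (i \<in> support g \<longleftrightarrow> i \<in> support h)"
proof -
  have "g ! i < 2" "h ! i < 2" using assms unfolding binary_space_def by auto
  then have "g ! i = h ! i \<longleftrightarrow> (g ! i \<noteq> 0 \<longleftrightarrow> h ! i \<noteq> 0)" by arith
  then show ?thesis using assms unfolding binary_space_def support_def by auto
qed

lemma hamming_dist_eq_card_sym_diff:
  assumes "g \<in> binary_space n" "h \<in> binary_space n"
  shows "hamming_dist g h = card (sym_diff (support g) (support h))"
proof -
  have "{i. i < length g \<and> g ! i \<noteq> h ! i} = sym_diff (support g) (support h)"
    using assms binary_space_nth_eq_iff[OF assms]
    unfolding binary_space_def support_def by auto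
  then show ?thesis unfolding hamming_dist_def by simp
qed

lemma support_inj_on_binary_space: "inj_on support (binary_space n)"
proof (rule inj_onI)
  fix g h assume g: "g \<in> binary_space n" and h: "h \<in> binary_space n"
    and eq: "support g = support h"
  show "g = h"
    using g h binary_space_nth_eq_iff[OF g h] eq
    by (intro nth_equalityI) (auto simp: binary_space_def)
qed

lemma one_perfect_covers:
  assumes "one_perfect n G" "X \<subseteq> {..<n}"
  shows "\<exists>g\<in>G. card (sym_diff X (support g)) \<le> 1"
proof -
  obtain g where g: "g \<in> G" "hamming_dist (indicator_list n X) g \<le> 1"
    using assms(1) indicator_list_in_binary_space unfolding one_perfect_def by blast
  then have "g \<in> binary_space n"
    using assms(1) unfolding one_perfect_def by blast
  then show ?thesis
    using g assms(2) hamming_dist_eq_card_sym_diff[OF indicator_list_in_binary_space]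
    by (metis support_indicator_list)
qed

lemma one_perfect_unique:
  assumes "one_perfect n G" "x \<in> binary_space n" "g \<in> G" "h \<in> G"
    and "hamming_dist x g \<le> 1" "hamming_dist x h \<le> 1"
  shows "g = h"
  using assms unfolding one_perfect_def by (metis (no_types, lifting))

text \<open>Two codewords at distance at most 2 both lie within distance 1 of a word
  obtained from one of them by flipping a single coordinate where they differ.\<close>
lemma one_perfect_min_dist:
  assumes perfect: "one_perfect n G" and "g \<in> G" "h \<in> G" "g \<noteq> h"
  shows "3 \<le> card (sym_diff (support g) (support h))"
proof (rule ccontr)
  assume close: "\<not> ?thesis"
  have bin: "g \<in> binary_space n" "h \<in> binary_space n"
    using assms unfolding one_perfect_def by auto
  then have "support g \<noteq> support h"
    using \<open>g \<noteq> h\<close> support_inj_on_binary_space by (auto dest: inj_onD)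
  then obtain i where i: "i \<in> sym_diff (support g) (support h)" by blast
  have "support g \<subseteq> {..<n}" "support h \<subseteq> {..<n}"
    using bin support_subset[of g] support_subset[of h] unfolding binary_space_def by auto
  define X where "X = sym_diff (support g) {i}"
  have X: "X \<subseteq> {..<n}"
    using i \<open>support g \<subseteq> {..<n}\<close> \<open>support h \<subseteq> {..<n}\<close> unfolding X_def by auto
  have "sym_diff X (support g) = {i}"
    and "sym_diff X (support h) = sym_diff (support g) (support h) - {i}"
    using i unfolding X_def by auto
  moreover have "card (sym_diff (support g) (support h) - {i}) \<le> 1"
    using close i by simp
  ultimately have "hamming_dist (indicator_list n X) g \<le> 1" "hamming_dist (indicator_list n X) h \<le> 1"
    using hamming_dist_eq_card_sym_diff[OF indicator_list_in_binary_space] bin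
    by (simp_all add: support_indicator_list[OF X])
  then show False
    using one_perfect_unique[OF perfect indicator_list_in_binary_space] assms by blast
qed

section \<open>Parity extension\<close>

definition skip_index :: "nat \<Rightarrow> nat \<Rightarrow> nat" where
  "skip_index p i = (if i < p then i else Suc i)"

definition insert_parity :: "nat \<Rightarrow> nat list \<Rightarrow> nat list" where
  "insert_parity p g = take p g @ [card (support g) mod 2] @ drop p g"

lemma inj_skip_index: "inj (skip_index p)"
  unfolding skip_index_def inj_def by auto

lemma skip_index_neq [simp]: "skip_index p i \<noteq> p"
  unfolding skip_index_def by auto

lemma notin_image_skip_index [simp]: "p \<notin> skip_index p ` A"
  using skip_index_neq by (metis imageE)

lemma range_skip_index: "j \<noteq> p \<Longrightarrow> j \<in> range (skip_index p)"
  unfolding skip_index_def by (rule image_eqI[of _ _ "if j < p then j else j - 1"]) auto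

lemma card_image_skip_index [simp]: "card (skip_index p ` A) = card A"
  by (meson card_image inj_on_subset inj_skip_index subset_UNIV)

lemma skip_index_less_Suc_iff: "skip_index p i < Suc n \<longleftrightarrow> i < n \<or> (i = n \<and> n < p)"
  unfolding skip_index_def by auto

lemma length_insert_parity: "p \<le> length g \<Longrightarrow> length (insert_parity p g) = Suc (length g)"
  unfolding insert_parity_def by simp

lemma nth_insert_parity_skip_index:
  assumes "p \<le> length g"
  shows "insert_parity p g ! skip_index p i = g ! i"
proof (cases "i < p")
  case True
  then show ?thesis
    using assms unfolding insert_parity_def skip_index_def by (simp add: nth_append)
next
  case False
  then have "Suc i - p = Suc (i - p)" by simp
  then show ?thesis
    using False assms unfolding insert_parity_def skip_index_def by (simp add: nth_append)
qed

lemma nth_insert_parity_at: "p \<le> length g \<Longrightarrow> insert_parity p g ! p = card (support g) mod 2"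
  unfolding insert_parity_def by (simp add: nth_append)

lemma support_insert_parity:
  assumes "p \<le> length g"
  shows "support (insert_parity p g)
           = skip_index p ` support g \<union> (if odd (card (support g)) then {p} else {})"
proof (rule set_eqI)
  fix j
  show "j \<in> support (insert_parity p g)
          \<longleftrightarrow> j \<in> skip_index p ` support g \<union> (if odd (card (support g)) then {p} else {})"
  proof (cases "j = p")
    case True
    then show ?thesis
      using assms by (auto simp: support_def length_insert_parity nth_insert_parity_at odd_iff_mod_2_eq_one)
  next
    case False
    then obtain i where j: "j = skip_index p i" using range_skip_index by blast
    have "j < Suc (length g) \<longleftrightarrow> i < length g"
      using assms unfolding j skip_index_less_Suc_iff by auto
    then show ?thesis
      using assms False inj_skip_index
      by (auto simp: j support_def length_insert_parity nth_insert_parity_skip_index inj_image_mem_iff)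
  qed
qed

lemma even_card_support_insert_parity:
  assumes "p \<le> length g"
  shows "even (card (support (insert_parity p g)))"
proof -
  show ?thesis
    by (simp add: support_insert_parity[OF assms])
qed

lemma card_sym_diff_support_insert_parity_ge:
  assumes "p \<le> length g" "p \<le> length h"
  shows "card (sym_diff (support g) (support h))
           \<le> card (sym_diff (support (insert_parity p g)) (support (insert_parity p h)))"
proof -
  have "skip_index p ` sym_diff (support g) (support h)
          \<subseteq> sym_diff (support (insert_parity p g)) (support (insert_parity p h))"
    unfolding support_insert_parity[OF assms(1)] support_insert_parity[OF assms(2)]
    using inj_image_mem_iff[OF inj_skip_index] by auto
  then show ?thesis
    by (metis card_image_skip_index card_mono finite_Diff finite_UnI finite_support)
qed

text \<open>A codeword within distance 1 of the word with coordinate p deleted is, after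
  parity extension, within distance 2 of the word; this distance is odd because the
  word is odd and the extended codeword even.\<close>
lemma one_perfect_insert_parity_covers_odd:
  assumes perfect: "one_perfect n G" and "p \<le> n"
    and Y: "Y \<subseteq> {..<Suc n}" "odd (card Y)"
  shows "\<exists>g\<in>G. card (sym_diff Y (support (insert_parity p g))) \<le> 1"
proof -
  define X where "X = skip_index p -` Y"
  have X: "X \<subseteq> {..<n}"
  proof
    fix i assume "i \<in> X"
    then have "skip_index p i < Suc n" using Y(1) by (auto simp: X_def)
    then show "i \<in> {..<n}" using \<open>p \<le> n\<close> by (auto simp: skip_index_less_Suc_iff)
  qed
  then have finite_X: "finite X" using finite_subset by blast
  obtain g where "g \<in> G" and g: "card (sym_diff X (support g)) \<le> 1"
    using one_perfect_covers[OF perfect X] by blast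
  then have "p \<le> length g"
    using perfect \<open>p \<le> n\<close> unfolding one_perfect_def binary_space_def by auto
  define A where "A = support (insert_parity p g)"
  have "sym_diff Y A \<subseteq> insert p (skip_index p ` sym_diff X (support g))"
  proof
    fix j assume j: "j \<in> sym_diff Y A"
    show "j \<in> insert p (skip_index p ` sym_diff X (support g))"
    proof (cases "j = p")
      case False
      then obtain i where "j = skip_index p i" using range_skip_index by blast
      then show ?thesis
        using j inj_image_mem_iff[OF inj_skip_index]
        by (auto simp: A_def X_def support_insert_parity[OF \<open>p \<le> length g\<close>] split: if_splits)
    qed simp
  qed
  then have "card (sym_diff Y A) \<le> card (insert p (skip_index p ` sym_diff X (support g)))"
    using finite_X by (intro card_mono) auto
  also have "\<dots> \<le> Suc (card (skip_index p ` sym_diff X (support g)))"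
    using finite_X by (simp add: card_insert_if)
  also have "\<dots> \<le> Suc (card (sym_diff X (support g)))"
    by simp
  finally have "card (sym_diff Y A) \<le> 2" using g by simp
  moreover have "finite Y" using Y(1) finite_subset by blast
  then have "odd (card (sym_diff Y A))"
    using card_sym_diff[OF \<open>finite Y\<close> finite_support, of "insert_parity p g"] Y(2)
      even_card_support_insert_parity[OF \<open>p \<le> length g\<close>]
    unfolding A_def by presburger
  ultimately have "card (sym_diff Y A) \<le> 1" by presburger
  then show ?thesis
    using \<open>g \<in> G\<close> unfolding A_def by blast
qed

section \<open>The Gray map and the cyclic shift\<close>

lemma length_gray [simp]: "length (gray x) = 2"
  by simp

lemma length_concat_map_gray: "length (concat (map gray u)) = 2 * length u"
  by (induction u) simp_all

lemma nth_concat_map_gray: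
  "k < 2 * length u \<Longrightarrow> concat (map gray u) ! k = gray (u ! (k div 2)) ! (k mod 2)"
proof (induction u arbitrary: k)
  case (Cons x u)
  show ?case
  proof (cases "k < 2")
    case False
    then obtain k' where "k = k' + 2" by (metis add.commute le_Suc_ex not_less)
    then show ?thesis
      using Cons by (simp del: gray.simps add: nth_append)
  qed (simp del: gray.simps add: nth_append)
qed simp

lemma length_Gray: "c \<in> Z2Z4_space a b \<Longrightarrow> length (Gray c) = a + 2 * b"
  unfolding Gray_def Z2Z4_space_def by (auto simp del: gray.simps simp: length_concat_map_gray)

lemma nth_Gray:
  assumes "c \<in> Z2Z4_space a b" "i < a + 2 * b"
  shows "Gray c ! i = (if i < a then fst c ! i else gray (snd c ! ((i - a) div 2)) ! ((i - a) mod 2))"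
  using assms unfolding Gray_def Z2Z4_space_def
  by (auto simp del: gray.simps simp: nth_append nth_concat_map_gray)

lemma length_filter_nonzero_gray:
  "x < 4 \<Longrightarrow> length (filter (\<lambda>y. y \<noteq> 0) (gray x)) = lee_weight x"
  by (cases x; cases "x - 1"; cases "x - 2") (auto simp: lee_weight_def)

lemma length_filter_nonzero_concat_map_gray:
  "\<forall>x\<in>set u. x < 4 \<Longrightarrow>
     length (filter (\<lambda>y. y \<noteq> 0) (concat (map gray u))) = sum_list (map lee_weight u)"
proof (induction u)
  case (Cons x u)
  have "length (filter (\<lambda>y. y \<noteq> 0) (gray x)) = lee_weight x"
    using Cons.prems by (intro length_filter_nonzero_gray) simp
  then show ?case using Cons by (simp del: gray.simps)
qed simp

lemma z2z4_weight_eq_card_support_Gray: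
  assumes "c \<in> Z2Z4_space a b"
  shows "z2z4_weight c = card (support (Gray c))"
proof -
  have "\<forall>x\<in>set (snd c). x < 4" using assms unfolding Z2Z4_space_def by auto
  then show ?thesis
    using length_filter_nonzero_concat_map_gray
    unfolding card_support Gray_def z2z4_weight_def by (simp del: gray.simps)
qed

lemma extend_at_in_Z2Z4_space:
  "c \<in> Z2Z4_space a b \<Longrightarrow> extend_at p c \<in> Z2Z4_space (Suc a) b"
  unfolding extend_at_def Z2Z4_space_def by (auto dest: in_set_takeD in_set_dropD)

lemma Gray_extend_at:
  assumes "c \<in> Z2Z4_space a b" "p \<le> a"
  shows "Gray (extend_at p c) = insert_parity p (Gray c)"
  using assms z2z4_weight_eq_card_support_Gray[OF assms(1)]
  unfolding extend_at_def insert_parity_def Gray_def Z2Z4_space_def by auto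

lemma support_Gray_zero: "support (Gray (z2z4_zero a b)) = {}"
proof -
  have "set (Gray (z2z4_zero a b)) \<subseteq> {0}" unfolding Gray_def z2z4_zero_def by auto
  then show ?thesis unfolding support_def by (auto dest: nth_mem)
qed

text \<open>The coordinate permutation of the Gray image induced by the cyclic shift
  of Z2^a x Z4^b: binary position k goes to k + 1 mod a, and the two Gray
  positions of quaternary coordinate q go to those of q + 1 mod b.\<close>
definition gray_shift_perm :: "nat \<Rightarrow> nat \<Rightarrow> nat \<Rightarrow> nat" where
  "gray_shift_perm a b k =
     (if k < a then Suc k mod a else a + 2 * (Suc ((k - a) div 2) mod b) + (k - a) mod 2)"

lemma length_cshift: "length (cshift xs) = length xs"
  unfolding cshift_def by auto

lemma set_cshift: "set (cshift xs) = set xs"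
  unfolding cshift_def by (cases xs rule: rev_cases) auto

lemma nth_cshift:
  assumes "i < length xs"
  shows "cshift xs ! (Suc i mod length xs) = xs ! i"
proof (cases "Suc i = length xs")
  case True
  then have "length xs - 1 = i" by simp
  with True show ?thesis unfolding cshift_def by (auto simp: last_conv_nth)
next
  case False
  with assms show ?thesis unfolding cshift_def by (auto simp: nth_butlast)
qed

lemma z2z4_sigma_in_Z2Z4_space: "d \<in> Z2Z4_space a b \<Longrightarrow> z2z4_sigma d \<in> Z2Z4_space a b"
  unfolding Z2Z4_space_def z2z4_sigma_def by (auto simp: length_cshift set_cshift)

lemma gray_shift_perm_less_iff: "gray_shift_perm a b k < a \<longleftrightarrow> k < a"
  unfolding gray_shift_perm_def by auto

lemma gray_shift_perm_less:
  assumes "k < a + 2 * b"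
  shows "gray_shift_perm a b k < a + 2 * b"
proof (cases "k < a")
  case True
  then show ?thesis using gray_shift_perm_less_iff[of a b k] by simp
next
  case False
  with assms have "Suc ((k - a) div 2) mod b < b" by simp
  with False show ?thesis by (simp add: gray_shift_perm_def)
qed

lemma nth_Gray_z2z4_sigma:
  assumes d: "d \<in> Z2Z4_space a b" and k: "k < a + 2 * b"
  shows "Gray (z2z4_sigma d) ! gray_shift_perm a b k = Gray d ! k"
proof -
  have len: "length (fst d) = a" "length (snd d) = b" using d unfolding Z2Z4_space_def by auto
  have "(gray_shift_perm a b k - a) div 2 = Suc ((k - a) div 2) mod b"
    and "(gray_shift_perm a b k - a) mod 2 = (k - a) mod 2" if "\<not> k < a"
    using that unfolding gray_shift_perm_def by auto
  moreover have "(k - a) div 2 < b" if "\<not> k < a" using that k by auto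
  ultimately show ?thesis
    using nth_Gray[OF z2z4_sigma_in_Z2Z4_space[OF d] gray_shift_perm_less[OF k]] nth_Gray[OF d k]
      nth_cshift[of k "fst d"] nth_cshift[of "(k - a) div 2" "snd d"] len
    by (auto simp del: gray.simps simp: z2z4_sigma_def gray_shift_perm_def)
qed

lemma funpow_gray_shift_perm:
  assumes "k < a + 2 * b"
  shows "(gray_shift_perm a b ^^ n) k =
           (if k < a then (k + n) mod a else a + 2 * (((k - a) div 2 + n) mod b) + (k - a) mod 2)"
proof (induction n)
  case (Suc n)
  have "(k - a) div 2 < b" if "\<not> k < a" using assms that by (simp add: div_less_iff_less_mult)
  then show ?case
    using Suc by (auto simp: gray_shift_perm_def mod_Suc_eq)
qed (use assms in auto)

lemma Suc_mod_inj: "x < m \<Longrightarrow> y < m \<Longrightarrow> Suc x mod m = Suc y mod m \<Longrightarrow> x = y"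
  by (auto simp: mod_Suc split: if_splits)

lemma inj_on_gray_shift_perm: "inj_on (gray_shift_perm a b) {..<a + 2 * b}"
proof (rule inj_onI)
  fix x y assume x: "x \<in> {..<a + 2 * b}" and y: "y \<in> {..<a + 2 * b}"
    and eq: "gray_shift_perm a b x = gray_shift_perm a b y"
  show "x = y"
  proof (cases "x < a \<and> y < a")
    case True
    then show ?thesis using eq Suc_mod_inj[of x a y] by (simp add: gray_shift_perm_def)
  next
    case False
    then have "\<not> x < a" "\<not> y < a"
      using eq gray_shift_perm_less_iff[of a b x] gray_shift_perm_less_iff[of a b y] by auto
    have digits: "m = m' \<and> r = r'" if "2 * m + r = 2 * m' + r'" "r < 2" "r' < 2" for m m' r r' :: nat
      using that by presburger
    have "2 * (Suc ((x - a) div 2) mod b) + (x - a) mod 2 = 2 * (Suc ((y - a) div 2) mod b) + (y - a) mod 2"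
      using eq \<open>\<not> x < a\<close> \<open>\<not> y < a\<close> unfolding gray_shift_perm_def by simp
    then have "Suc ((x - a) div 2) mod b = Suc ((y - a) div 2) mod b \<and> (x - a) mod 2 = (y - a) mod 2"
      by (rule digits) simp_all
    moreover have "(x - a) div 2 < b" "(y - a) div 2 < b" using x y \<open>\<not> x < a\<close> \<open>\<not> y < a\<close> by (simp_all add: div_less_iff_less_mult)
    ultimately have "(x - a) div 2 = (y - a) div 2" "(x - a) mod 2 = (y - a) mod 2"
      using Suc_mod_inj by blast+
    then show ?thesis
      using \<open>\<not> x < a\<close> \<open>\<not> y < a\<close> by (metis div_mod_decomp le_add_diff_inverse not_less)
  qed
qed

lemma image_gray_shift_perm: "gray_shift_perm a b ` {..<a + 2 * b} = {..<a + 2 * b}"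
  using gray_shift_perm_less inj_on_gray_shift_perm by (intro endo_inj_surj) auto

lemma support_Gray_z2z4_sigma:
  assumes d: "d \<in> Z2Z4_space a b"
  shows "support (Gray (z2z4_sigma d)) = gray_shift_perm a b ` support (Gray d)"
proof (rule set_eqI)
  fix j
  have "j \<in> support (Gray (z2z4_sigma d)) \<longleftrightarrow> j < a + 2 * b \<and> Gray (z2z4_sigma d) ! j \<noteq> 0"
    using length_Gray[OF z2z4_sigma_in_Z2Z4_space[OF d]] unfolding support_def by simp
  also have "\<dots> \<longleftrightarrow> (\<exists>k < a + 2 * b. j = gray_shift_perm a b k \<and> Gray d ! k \<noteq> 0)"
  proof
    assume j: "j < a + 2 * b \<and> Gray (z2z4_sigma d) ! j \<noteq> 0"
    then obtain k where "k < a + 2 * b" "j = gray_shift_perm a b k"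
      using image_gray_shift_perm[of a b] by (metis imageE lessThan_iff)
    then show "\<exists>k < a + 2 * b. j = gray_shift_perm a b k \<and> Gray d ! k \<noteq> 0"
      using j nth_Gray_z2z4_sigma[OF d] by auto
  qed (use gray_shift_perm_less nth_Gray_z2z4_sigma[OF d] in auto)
  also have "\<dots> \<longleftrightarrow> j \<in> gray_shift_perm a b ` support (Gray d)"
    using length_Gray[OF d] unfolding support_def by auto
  finally show "j \<in> support (Gray (z2z4_sigma d)) \<longleftrightarrow> j \<in> gray_shift_perm a b ` support (Gray d)" .
qed

section \<open>Extended perfect families\<close>

locale extended_perfect_family =
  fixes N :: nat and S :: "nat set set"
  assumes subset_lessThan: "A \<in> S \<Longrightarrow> A \<subseteq> {..<N}"
    and empty_mem: "{} \<in> S"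
    and min_dist: "A \<in> S \<Longrightarrow> B \<in> S \<Longrightarrow> A \<noteq> B \<Longrightarrow> 3 \<le> card (sym_diff A B)"
    and even_card: "A \<in> S \<Longrightarrow> even (card A)"
    and covers_odd: "Y \<subseteq> {..<N} \<Longrightarrow> odd (card Y) \<Longrightarrow> \<exists>A\<in>S. card (sym_diff Y A) \<le> 1"
begin

lemma finite_mem: "A \<in> S \<Longrightarrow> finite A"
  using subset_lessThan finite_subset by blast

lemma card_sym_diff_neq_2: "A \<in> S \<Longrightarrow> B \<in> S \<Longrightarrow> card (sym_diff A B) \<noteq> 2"
  using min_dist by fastforce

lemma insert_insert_not_both_mem:
  assumes "x \<notin> A" "y \<notin> A" "x \<noteq> y" "insert x A \<in> S" "insert y A \<in> S"
  shows False
proof -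
  have "sym_diff (insert x A) (insert y A) = {x, y}" using assms(1-3) by auto
  then show False using card_sym_diff_neq_2[OF assms(4,5)] assms(3) by simp
qed

lemma triple_extends:
  assumes Y: "Y \<subseteq> {..<N}" "card Y = 3"
  shows "\<exists>k<N. k \<notin> Y \<and> insert k Y \<in> S"
proof -
  obtain A where A: "A \<in> S" "card (sym_diff Y A) \<le> 1"
    using covers_odd[OF Y(1)] Y(2) by auto
  have "finite Y" using Y(1) finite_subset by blast
  have "A \<noteq> {}" using A(2) Y(2) by auto
  then have "3 \<le> card A" using min_dist[OF A(1) empty_mem] by simp
  have "odd (card (sym_diff Y A))"
    using card_sym_diff[OF \<open>finite Y\<close> finite_mem[OF A(1)]] Y(2) even_card[OF A(1)] by presburger
  then have "card (sym_diff Y A) = 1" using A(2) by presburger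
  then obtain k where k: "sym_diff Y A = {k}" using card_1_singletonE by blast
  have "k \<notin> Y"
  proof
    assume "k \<in> Y"
    then have "A = Y - {k}" using k by blast
    then show False using \<open>k \<in> Y\<close> \<open>3 \<le> card A\<close> Y(2) by simp
  qed
  have "A = insert k Y"
  proof (rule set_eqI)
    fix x
    have "x \<in> sym_diff Y A \<longleftrightarrow> x = k" using k by simp
    then show "x \<in> A \<longleftrightarrow> x \<in> insert k Y" using \<open>k \<notin> Y\<close> by auto
  qed
  then show ?thesis using \<open>k \<notin> Y\<close> A(1) subset_lessThan by blast
qed

end

lemma card_sym_diff_translate_2:
  fixes A :: "nat set"
  assumes "A \<subseteq> {..<4}" "odd (card A)"
  shows "card (sym_diff A ((\<lambda>k. (k + 2) mod 4) ` A)) = 2"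
proof -
  have "A \<in> Pow {0, 1, 2, 3}" using assms(1) by auto
  then have "A \<in> {{0}, {1}, {2}, {3}, {1, 2, 3}, {0, 2, 3}, {0, 1, 3}, {0, 1, 2}}"
    using assms(2) by (simp add: Pow_insert) (elim disjE; simp)
  then show ?thesis by (elim insertE; simp add: insert_Diff_if)
qed

locale shift_invariant_extended_perfect_family = extended_perfect_family "4 + 2 * b" S for b S +
  assumes shift_closed: "A \<in> S \<Longrightarrow> gray_shift_perm 4 b ` A \<in> S"
begin

lemma funpow_shift_closed: "A \<in> S \<Longrightarrow> (gray_shift_perm 4 b ^^ n) ` A \<in> S"
proof (induction n)
  case (Suc n)
  then have "gray_shift_perm 4 b ` (gray_shift_perm 4 b ^^ n) ` A \<in> S" by (simp add: shift_closed)
  then show ?case by (simp add: image_image)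
qed simp

text \<open>When b divides 6, the sixth power of the shift fixes the quaternary coordinates
  and translates the binary ones by 2, so a member with odd binary part would be at
  distance 2 from its image.\<close>
lemma even_card_binary_part:
  assumes "b dvd 6" "A \<in> S"
  shows "even (card (A \<inter> {..<4}))"
proof (rule ccontr)
  assume odd: "odd (card (A \<inter> {..<4}))"
  define A0 where "A0 = A \<inter> {..<4}"
  have "(gray_shift_perm 4 b ^^ 6) k = (if k < 4 then (k + 2) mod 4 else k)" if "k \<in> A" for k
  proof -
    have "k < 4 + 2 * b" using that subset_lessThan[OF assms(2)] by auto
    moreover have "((k - 4) div 2 + 6) mod b = (k - 4) div 2" if "\<not> k < 4"
    proof -
      have "(k - 4) div 2 < b" using \<open>k < 4 + 2 * b\<close> that by (simp add: div_less_iff_less_mult)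
      moreover have "((k - 4) div 2 + 6) mod b = (k - 4) div 2 mod b"
        using assms(1) by (metis add.right_neutral dvd_imp_mod_0 mod_add_right_eq)
      ultimately show ?thesis by simp
    qed
    moreover have "(k + 6) mod 4 = (k + 2) mod 4" by presburger
    ultimately show ?thesis
      by (auto simp: funpow_gray_shift_perm)
  qed
  then have "(gray_shift_perm 4 b ^^ 6) ` A = (\<lambda>k. (k + 2) mod 4) ` A0 \<union> (A - {..<4})"
    unfolding A0_def by (force simp: image_iff)
  then have "sym_diff A ((gray_shift_perm 4 b ^^ 6) ` A) = sym_diff A0 ((\<lambda>k. (k + 2) mod 4) ` A0)"
    unfolding A0_def by auto
  then show False
    using card_sym_diff_translate_2[of A0] odd
      card_sym_diff_neq_2[OF assms(2) funpow_shift_closed[OF assms(2), of 6]]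
    unfolding A0_def by simp
qed

lemma triple_extends_in_binary_part:
  assumes "b dvd 6" "Y \<subseteq> {..<4 + 2 * b}" "card Y = 3" "Y \<inter> {..<4} = {0}"
  shows "\<exists>k\<in>{1, 2, 3}. insert k Y \<in> S"
proof -
  obtain k where k: "k \<notin> Y" "insert k Y \<in> S"
    using triple_extends[OF assms(2,3)] by blast
  have "k < 4"
  proof (rule ccontr)
    assume "\<not> k < 4"
    then have "insert k Y \<inter> {..<4} = {0}" using assms(4) by auto
    then show False using even_card_binary_part[OF assms(1) k(2)] by simp
  qed
  moreover have "k \<noteq> 0" using k(1) assms(4) by (metis IntD1 insertI1)
  ultimately have "k \<in> {1, 2, 3}" by (simp; arith)
  then show ?thesis using k(2) by blast
qed

lemma b_neq_6: "b \<noteq> 6"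
proof
  assume "b = 6"
  have "\<exists>k\<in>{1, 2, 3}. insert k {0, 4, q} \<in> S" if "q \<in> {5, 6, 7, 8}" for q :: nat
    using that \<open>b = 6\<close> by (intro triple_extends_in_binary_part) auto
  then obtain \<kappa> where \<kappa>: "\<And>q. q \<in> {5, 6, 7, 8} \<Longrightarrow> \<kappa> q \<in> {1, 2, 3} \<and> insert (\<kappa> q) {0, 4, q} \<in> S"
    by metis
  have "inj_on \<kappa> {5, 6, 7, 8}"
  proof (rule inj_onI, rule ccontr)
    fix q q' assume q: "q \<in> {5, 6, 7, 8}" "q' \<in> {5, 6, 7, 8}" "\<kappa> q = \<kappa> q'" "q \<noteq> q'"
    have "insert q {\<kappa> q, 0, 4} \<in> S" "insert q' {\<kappa> q, 0, 4} \<in> S"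
      using \<kappa>[OF q(1)] \<kappa>[OF q(2)] q(3) by (simp_all add: insert_commute)
    then show False
      using insert_insert_not_both_mem[of q "{\<kappa> q, 0, 4}" q'] q \<kappa>[OF q(1)] by auto
  qed
  moreover have "\<kappa> ` {5, 6, 7, 8} \<subseteq> {1, 2, 3}"
    using \<kappa> by (intro image_subsetI) blast
  ultimately have "card {5, 6, 7, 8 :: nat} \<le> card {1, 2, 3 :: nat}"
    by (intro card_inj_on_le) auto
  then show False by simp
qed

lemma b_eq_2_imp_completion_of_0_4_6:
  assumes "b = 2"
  shows "{2, 0, 4, 6} \<in> S"
proof -
  let ?\<pi> = "gray_shift_perm 4 2"
  obtain j where j: "j \<in> {1, 2, 3}" "{j, 0, 4, 6} \<in> S"
    using triple_extends_in_binary_part[of "{0, 4, 6}"] assms by auto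
  have "j \<noteq> 1"
  proof
    assume "j = 1"
    moreover have "card (sym_diff {1, 0, 4, 6} (?\<pi> ` {1, 0, 4, 6})) = 2"
      by (simp add: gray_shift_perm_def insert_Diff_if)
    ultimately show False using card_sym_diff_neq_2 j(2) shift_closed assms by metis
  qed
  moreover have "j \<noteq> 3"
  proof
    assume "j = 3"
    moreover have "card (sym_diff {3, 0, 4, 6} (?\<pi> ` {3, 0, 4, 6})) = 2"
      by (simp add: gray_shift_perm_def insert_Diff_if)
    ultimately show False using card_sym_diff_neq_2 j(2) shift_closed assms by metis
  qed
  ultimately show ?thesis using j by auto
qed

lemma b_neq_2: "b \<noteq> 2"
proof
  assume "b = 2"
  let ?\<pi> = "gray_shift_perm 4 2"
  have shifted: "?\<pi> ` A \<in> S" if "A \<in> S" for A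
    using shift_closed[OF that] \<open>b = 2\<close> by simp
  obtain j where j: "j \<in> {1, 2, 3}" "{j, 0, 4, 7} \<in> S"
    using triple_extends_in_binary_part[of "{0, 4, 7}"] \<open>b = 2\<close> by auto
  obtain m where m: "m \<in> {1, 2, 3}" "{m, 0, 4, 5} \<in> S"
    using triple_extends_in_binary_part[of "{0, 4, 5}"] \<open>b = 2\<close> by auto
  have "j \<noteq> 2" "m \<noteq> 2" "m \<noteq> j"
    using insert_insert_not_both_mem[of 7 "{2, 0, 4}" 6] insert_insert_not_both_mem[of 5 "{2, 0, 4}" 6]
      insert_insert_not_both_mem[of 5 "{m, 0, 4}" 7] b_eq_2_imp_completion_of_0_4_6 \<open>b = 2\<close> j m
    by (auto simp: insert_commute)
  then have "j = 1 \<and> m = 3 \<or> j = 3 \<and> m = 1" using j m by auto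
  then show False
  proof
    assume "j = 1 \<and> m = 3"
    moreover have "card (sym_diff (?\<pi> ` ?\<pi> ` ?\<pi> ` {1, 0, 4, 7}) {3, 0, 4, 5}) = 2"
      by (simp add: gray_shift_perm_def insert_Diff_if)
    ultimately show False using card_sym_diff_neq_2 j(2) m(2) shifted by metis
  next
    assume "j = 3 \<and> m = 1"
    moreover have "card (sym_diff (?\<pi> ` {3, 0, 4, 7}) {1, 0, 4, 5}) = 2"
      by (simp add: gray_shift_perm_def insert_Diff_if)
    ultimately show False using card_sym_diff_neq_2 j(2) m(2) shifted by metis
  qed
qed

end

section \<open>The extended code\<close>

lemma cyclic_imp_support_Gray_shift_closed:
  assumes "D \<subseteq> Z2Z4_space a b" "Z2Z4_cyclic D" "A \<in> support ` Gray ` D"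
  shows "gray_shift_perm a b ` A \<in> support ` Gray ` D"
proof -
  obtain d where "d \<in> D" "A = support (Gray d)" using assms(3) by blast
  moreover have "z2z4_sigma d \<in> D" using \<open>d \<in> D\<close> assms(2) unfolding Z2Z4_cyclic_def by blast
  ultimately show ?thesis
    using support_Gray_z2z4_sigma assms(1) by (metis image_eqI subsetD)
qed

lemma extended_perfect_family_extend_at:
  assumes additive: "Z2Z4_additive a b C" and perfect: "Z2Z4_one_perfect a b C" and "p \<le> a"
  shows "extended_perfect_family (Suc a + 2 * b) (support ` Gray ` extend_at p ` C)"
proof
  have space: "C \<subseteq> Z2Z4_space a b" and zero: "z2z4_zero a b \<in> C"
    using additive unfolding Z2Z4_additive_def by auto
  have G: "one_perfect (a + 2 * b) (Gray ` C)" using perfect unfolding Z2Z4_one_perfect_def .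
  have length: "length (Gray c) = a + 2 * b" if "c \<in> C" for c
    using length_Gray space that by blast
  then have p: "p \<le> length (Gray c)" if "c \<in> C" for c
    using that \<open>p \<le> a\<close> by simp
  have "Gray (extend_at p c) = insert_parity p (Gray c)" if "c \<in> C" for c
    using Gray_extend_at space that \<open>p \<le> a\<close> by blast
  then have S: "support ` Gray ` extend_at p ` C = (\<lambda>g. support (insert_parity p g)) ` Gray ` C"
    by (simp add: image_image cong: image_cong)
  show "A \<subseteq> {..<Suc a + 2 * b}" if A: "A \<in> support ` Gray ` extend_at p ` C" for A
  proof -
    obtain c where "c \<in> C" "A = support (insert_parity p (Gray c))" using A unfolding S by blast
    then show ?thesis
      using support_subset[of "insert_parity p (Gray c)"] length_insert_parity[OF p] length by simp
  qed
  have "support (insert_parity p (Gray (z2z4_zero a b))) = {}"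
    using support_insert_parity[OF p[OF zero]] by (simp add: support_Gray_zero)
  then show "{} \<in> support ` Gray ` extend_at p ` C"
    unfolding S unfolding image_image by (rule image_eqI[OF sym zero])
  show "3 \<le> card (sym_diff A B)"
    if AB: "A \<in> support ` Gray ` extend_at p ` C" "B \<in> support ` Gray ` extend_at p ` C" "A \<noteq> B"
    for A B
  proof -
    obtain c d where "c \<in> C" "A = support (insert_parity p (Gray c))"
      and "d \<in> C" "B = support (insert_parity p (Gray d))"
      using AB(1,2) unfolding S by blast
    moreover from this have "Gray c \<noteq> Gray d" using AB(3) by metis
    ultimately show ?thesis
      using one_perfect_min_dist[OF G] card_sym_diff_support_insert_parity_ge[OF p p]
      by (meson image_eqI le_trans)
  qed
  show "even (card A)" if "A \<in> support ` Gray ` extend_at p ` C" for A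
    using that even_card_support_insert_parity p unfolding S by blast
  show "\<exists>A\<in>support ` Gray ` extend_at p ` C. card (sym_diff Y A) \<le> 1"
    if "Y \<subseteq> {..<Suc a + 2 * b}" "odd (card Y)" for Y
  proof -
    have "p \<le> a + 2 * b" "Y \<subseteq> {..<Suc (a + 2 * b)}" using that(1) \<open>p \<le> a\<close> by auto
    from one_perfect_insert_parity_covers_odd[OF G this that(2)] show ?thesis
      unfolding S by blast
  qed
qed

theorem lemma4p1:
  fixes r t p :: nat and C :: "z2z4vec set"
  assumes "(r, t) \<in> {(2, 3), (2, 4)}"
    and "Z2Z4_additive (2 ^ r - 1) (2 ^ (t - 1) - 2 ^ (r - 1)) C"
    and "Z2Z4_one_perfect (2 ^ r - 1) (2 ^ (t - 1) - 2 ^ (r - 1)) C"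
    and "p \<le> 2 ^ r - 1"
  shows "\<not> Z2Z4_cyclic (extend_at p ` C)"
proof
  assume cyclic: "Z2Z4_cyclic (extend_at p ` C)"
  define b :: nat where "b = 2 ^ (t - 1) - 2 ^ (r - 1)"
  have a: "(2::nat) ^ r - 1 = 3" and b: "b = 2 \<or> b = 6"
    using assms(1) unfolding b_def by auto
  let ?S = "support ` Gray ` extend_at p ` C"
  have "C \<subseteq> Z2Z4_space 3 b"
    using assms(2) unfolding a b_def[symmetric] Z2Z4_additive_def by simp
  then have "extend_at p ` C \<subseteq> Z2Z4_space 4 b"
    using extend_at_in_Z2Z4_space[of _ 3 b p] by auto
  from cyclic_imp_support_Gray_shift_closed[OF this cyclic]
  have "gray_shift_perm 4 b ` A \<in> ?S" if "A \<in> ?S" for A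
    using that .
  moreover have "extended_perfect_family (4 + 2 * b) ?S"
    using extended_perfect_family_extend_at[of 3 b C p] assms(2-4)
    unfolding a b_def[symmetric] by simp
  ultimately have "shift_invariant_extended_perfect_family b ?S"
    by (simp add: shift_invariant_extended_perfect_family_def
        shift_invariant_extended_perfect_family_axioms_def)
  then show False
    using shift_invariant_extended_perfect_family.b_neq_2
      shift_invariant_extended_perfect_family.b_neq_6 b by blast
qed

end
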